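(* Let $\delta>0$ and let $\mathcal{M}^{(1)},\mathcal{M}^{(2)}$ be two RMMDPs on the same $\mathcal S,\mathcal A,\mathcal Z$ and horizon $H$, with the same transition kernel $T$ and the same initial state distribution $\nu$, but with possibly different mixing weights and latent reward models and with $M_1$ and $M_2$ latent contexts respectively. Let $d:=\min(H,M_1+M_2-1)$ and define $$\mathcal X_d:=\Big\{\mathbf x\in(\mathcal S\times\mathcal A)^{d}\ :\ \forall\,\mathbf z\in\mathcal Z^{d},\ \max_{\mathcal I\subseteq[d]}\big|\mathbf M^{(1)}(\mathbf x_{\mathcal I},\mathbf z_{\mathcal I})-\mathbf M^{(2)}(\mathbf x_{\mathcal I},\mathbf z_{\mathcal I})\big|\le\delta\Big\},$$ $$\mathcal E_{\rm tot}:=\Big\{x_{1:H}\in(\mathcal S\times\mathcal A)^{H}\ :\ \forall\,1\le t_1<\dots<t_d\le H,\ (x_{t_q})_{q=1}^{d}\in\mathcal X_d\Big\}.$$ Then for every subset $\mathcal E\subseteq\mathcal E_{\rm tot}$ and every history-dependent policy $\pi\in\Pi$, $$\sum_{\tau:\,x_{1:H}\in\mathcal E}\big|\mathbb P^{(1)}_\pi(\tau)-\mathbb P^{(2)}_\pi(\tau)\big|\le\sup_{\pi'\in\Pi}\mathbb P^{(1)}_{\pi'}(x_{1:H}\in\mathcal E)\cdot(4HZ)^{d}\cdot\delta .$$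
   Context: An RMMDP (reward-mixing MDP) $\mathcal M=(\mathcal S,\mathcal A,T,\nu,\{w_m\}_{m=1}^M,\{\mu_m\}_{m=1}^M)$ has finite state space $\mathcal S$ ($S=|\mathcal S|$), finite action space $\mathcal A$ ($A=|\mathcal A|$), transition kernel $T(s'|s,a)$, initial distribution $\nu$, mixing weights $w_m\ge0$ summing to $1$, and reward models $\mu_m(s,a,z)=\mathbb P(r=z\mid m,s,a)$ supported on a finite set $\mathcal Z\subset[-1,1]$ with $Z=|\mathcal Z|$. An episode of horizon $H$: a latent context $m$ is drawn with probability $w_m$ (unobserved), $s_1\sim\nu$, and for $t=1,\dots,H$ the agent chooses $a_t$, receives $r_t\sim\mu_m(s_t,a_t,\cdot)$ and (if $t<H$) $s_{t+1}\sim T(\cdot|s_t,a_t)$. Write $x_t=(s_t,a_t)$, $\tau=(s_t,a_t,r_t)_{t=1}^H$, and $h_t=(s_1,a_1,r_1,\dots,s_{t-1},a_{t-1},r_{t-1},s_t)$. $\Pi$ is the class of all history-dependent (possibly randomized) policies $\pi(a_t\mid h_t)$. For $\pi\in\Pi$, $\mathbb P_\pi(\tau)=\nu(s_1)\prod_{t=1}^{H-1}T(s_{t+1}|s_t,a_t)\prod_{t=1}^H\pi(a_t|h_t)\sum_{m}w_m\prod_{t=1}^H\mu_m(x_t,r_t)$, and $\mathbb P_\pi(x_{1:H}\in\mathcal E)$ is the probability that the state–action part of the trajectory lies in $\mathcal E$. For sequences $\mathbf x=(x_i)_{i=1}^q\in(\mathcal S\times\mathcal A)^q$, $\mathbf z=(z_i)_{i=1}^q\in\mathcal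 Z^q$, the moment is $\mathbf M(\mathbf x,\mathbf z)=\sum_m w_m\prod_{i=1}^q\mu_m(x_i,z_i)$ (equal to $1$ for the empty sequence); for $\mathcal I\subseteq[q]$, $\mathbf x_{\mathcal I}=(x_i)_{i\in\mathcal I}$ is the subsequence at positions $\mathcal I$. Superscripts $(1),(2)$ refer to quantities of $\mathcal M^{(1)},\mathcal M^{(2)}$. *)

theory Defs
  imports Main "HOL-Library.FuncSet" Complex_Main
begin

text \<open>A trajectory is a list of triples (s_t, a_t, r_t), t = 1..H (list index t-1).
  Latent contexts of a model with M contexts are the naturals m < M.
  Transition kernel: T s a s' = T(s'|s,a).
  Reward model: mu m s a z = P(r = z | m, s, a).
  History-dependent randomized policy: pi h s a = pi(a | h_t), where h is the
  list of past triples (s_1,a_1,r_1),...,(s_{t-1},a_{t-1},r_{t-1}) and s = s_t.\<close>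

definition rmmdp ::
  "'s set \<Rightarrow> 'a set \<Rightarrow> real set \<Rightarrow> ('s \<Rightarrow> 'a \<Rightarrow> 's \<Rightarrow> real) \<Rightarrow> ('s \<Rightarrow> real)
   \<Rightarrow> nat \<Rightarrow> (nat \<Rightarrow> real) \<Rightarrow> (nat \<Rightarrow> 's \<Rightarrow> 'a \<Rightarrow> real \<Rightarrow> real) \<Rightarrow> bool" where
  "rmmdp S A Z T \<nu> M w \<mu> \<longleftrightarrow>
     finite S \<and> S \<noteq> {} \<and> finite A \<and> A \<noteq> {} \<and> finite Z \<and> Z \<noteq> {} \<and> Z \<subseteq> {-1..1} \<and>
     (\<forall>s\<in>S. \<nu> s \<ge> 0) \<and> (\<Sum>s\<in>S. \<nu> s) = 1 \<and>
     (\<forall>s\<in>S. \<forall>a\<in>A. (\<forall>s'\<in>S. T s a s' \<ge> 0) \<and> (\<Sum>s'\<in>S. T s a s') = 1) \<and>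
     (\<forall>m<M. w m \<ge> 0) \<and> (\<Sum>m<M. w m) = 1 \<and>
     (\<forall>m<M. \<forall>s\<in>S. \<forall>a\<in>A. (\<forall>z\<in>Z. \<mu> m s a z \<ge> 0) \<and> (\<Sum>z\<in>Z. \<mu> m s a z) = 1)"

definition policies :: "'s set \<Rightarrow> 'a set \<Rightarrow> (('s \<times> 'a \<times> real) list \<Rightarrow> 's \<Rightarrow> 'a \<Rightarrow> real) set" where
  "policies S A = {\<pi>. \<forall>h. \<forall>s\<in>S. (\<forall>a\<in>A. \<pi> h s a \<ge> 0) \<and> (\<Sum>a\<in>A. \<pi> h s a) = 1}"

definition trajs :: "'s set \<Rightarrow> 'a set \<Rightarrow> real set \<Rightarrow> nat \<Rightarrow> ('s \<times> 'a \<times> real) list set" where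
  "trajs S A Z H = {\<tau>. length \<tau> = H \<and> set \<tau> \<subseteq> S \<times> A \<times> Z}"

definition sa_part :: "('s \<times> 'a \<times> real) list \<Rightarrow> ('s \<times> 'a) list" where
  "sa_part \<tau> = map (\<lambda>(s,a,r). (s,a)) \<tau>"

definition traj_prob ::
  "('s \<Rightarrow> 'a \<Rightarrow> 's \<Rightarrow> real) \<Rightarrow> ('s \<Rightarrow> real) \<Rightarrow> nat \<Rightarrow> (nat \<Rightarrow> real) \<Rightarrow> (nat \<Rightarrow> 's \<Rightarrow> 'a \<Rightarrow> real \<Rightarrow> real)
   \<Rightarrow> (('s \<times> 'a \<times> real) list \<Rightarrow> 's \<Rightarrow> 'a \<Rightarrow> real) \<Rightarrow> ('s \<times> 'a \<times> real) list \<Rightarrow> real" where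
  "traj_prob T \<nu> M w \<mu> \<pi> \<tau> =
     (let H = length \<tau>;
          st = (\<lambda>t. fst (\<tau> ! t)); ac = (\<lambda>t. fst (snd (\<tau> ! t))); rw = (\<lambda>t. snd (snd (\<tau> ! t)))
      in \<nu> (st 0) * (\<Prod>t<H - 1. T (st t) (ac t) (st (Suc t)))
         * (\<Prod>t<H. \<pi> (take t \<tau>) (st t) (ac t))
         * (\<Sum>m<M. w m * (\<Prod>t<H. \<mu> m (st t) (ac t) (rw t))))"

definition event_prob ::
  "'s set \<Rightarrow> 'a set \<Rightarrow> real set \<Rightarrow> nat \<Rightarrow> ('s \<Rightarrow> 'a \<Rightarrow> 's \<Rightarrow> real) \<Rightarrow> ('s \<Rightarrow> real) \<Rightarrow> nat \<Rightarrow> (nat \<Rightarrow> real)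
   \<Rightarrow> (nat \<Rightarrow> 's \<Rightarrow> 'a \<Rightarrow> real \<Rightarrow> real) \<Rightarrow> (('s \<times> 'a \<times> real) list \<Rightarrow> 's \<Rightarrow> 'a \<Rightarrow> real)
   \<Rightarrow> ('s \<times> 'a) list set \<Rightarrow> real" where
  "event_prob S A Z H T \<nu> M w \<mu> \<pi> E =
     (\<Sum>\<tau>\<in>{\<tau>\<in>trajs S A Z H. sa_part \<tau> \<in> E}. traj_prob T \<nu> M w \<mu> \<pi> \<tau>)"

definition moment ::
  "nat \<Rightarrow> (nat \<Rightarrow> real) \<Rightarrow> (nat \<Rightarrow> 's \<Rightarrow> 'a \<Rightarrow> real \<Rightarrow> real) \<Rightarrow> ('s \<times> 'a) list \<Rightarrow> real list \<Rightarrow> real" where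
  "moment M w \<mu> xs zs =
     (\<Sum>m<M. w m * (\<Prod>i<length xs. \<mu> m (fst (xs ! i)) (snd (xs ! i)) (zs ! i)))"

text \<open>The set X_d; subsequences x_I are nths x I for I subset of [d] = {0..<d}.\<close>
definition Xset ::
  "'s set \<Rightarrow> 'a set \<Rightarrow> real set \<Rightarrow> nat \<Rightarrow> real \<Rightarrow> nat \<Rightarrow> (nat \<Rightarrow> real) \<Rightarrow> (nat \<Rightarrow> 's \<Rightarrow> 'a \<Rightarrow> real \<Rightarrow> real)
   \<Rightarrow> nat \<Rightarrow> (nat \<Rightarrow> real) \<Rightarrow> (nat \<Rightarrow> 's \<Rightarrow> 'a \<Rightarrow> real \<Rightarrow> real) \<Rightarrow> ('s \<times> 'a) list set" where
  "Xset S A Z d \<delta> M1 w1 \<mu>1 M2 w2 \<mu>2 =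
     {xs. length xs = d \<and> set xs \<subseteq> S \<times> A \<and>
        (\<forall>zs. length zs = d \<and> set zs \<subseteq> Z \<longrightarrow>
           (\<forall>I\<subseteq>{..<d}. \<bar>moment M1 w1 \<mu>1 (nths xs I) (nths zs I)
                          - moment M2 w2 \<mu>2 (nths xs I) (nths zs I)\<bar> \<le> \<delta>))}"

text \<open>E_tot: every length-d subsequence (positions t_1 < ... < t_d, i.e. a d-element
  set of positions in {0..<H}) lies in X_d.\<close>
definition Etot ::
  "'s set \<Rightarrow> 'a set \<Rightarrow> nat \<Rightarrow> nat \<Rightarrow> ('s \<times> 'a) list set \<Rightarrow> ('s \<times> 'a) list set" where
  "Etot S A H d X = {xs. length xs = H \<and> set xs \<subseteq> S \<times> A \<and>
      (\<forall>P\<subseteq>{..<H}. card P = d \<longrightarrow> nths xs P \<in> X)}"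

end

theory Submission
  imports Defs
begin

text \<open>The reward part of P_pi^(1) - P_pi^(2) at a state-action sequence x is a signed
  mixture sum_k c_k prod_t v_k(t) over the M1 + M2 latent contexts of both models.  Expand
  every product around anchors: for a set C of positions, position t is anchored at the
  component whose index is the rank of t in C.  Sets C with at least M1 + M2 elements
  contribute nothing, since every component then coincides with its anchor somewhere on C;
  for smaller C, expanding the remaining brackets leaves differences of moments of order
  at most d, each of which is at most delta on E_tot.  The leftover products of anchor
  reward probabilities, integrated against pi, form the probability of E under a policy that
  simulates pi with rewards drawn from the anchors (and uniformly on the expanded positions),
  so they are bounded by the supremum over all policies.  Counting the pairs J \<subseteq> C yields
  the factor (4 H card Z)^d.\<close>

section \<open>Expansion of products around anchors\<close>

definition rank_in :: "nat set \<Rightarrow> nat \<Rightarrow> nat" where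
  "rank_in C t = card {t'\<in>C. t' < t}"

lemma rank_in_insert_greater: "t < n \<Longrightarrow> rank_in (insert n C) t = rank_in C t"
  unfolding rank_in_def by (rule arg_cong[where f=card]) auto

lemma rank_in_insert_self: "rank_in (insert n C) n = rank_in C n"
  unfolding rank_in_def by (rule arg_cong[where f=card]) auto

lemma rank_in_eq_card: "C \<subseteq> {..<n} \<Longrightarrow> rank_in C n = card C"
  unfolding rank_in_def by (rule arg_cong[where f=card]) auto

lemma rank_in_le_card: "finite C \<Longrightarrow> rank_in C s \<le> card C"
  unfolding rank_in_def by (rule card_mono) auto

lemma rank_in_less_card: "finite C \<Longrightarrow> t \<in> C \<Longrightarrow> rank_in C t < card C"
  unfolding rank_in_def by (rule psubset_card_mono) auto

lemma rank_in_strict_mono: "finite C \<Longrightarrow> t1 \<in> C \<Longrightarrow> t1 < t2 \<Longrightarrow> rank_in C t1 < rank_in C t2"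
  unfolding rank_in_def by (rule psubset_card_mono) auto

lemma inj_on_rank_in: "finite C \<Longrightarrow> inj_on (rank_in C) C"
  by (rule inj_onI) (metis rank_in_strict_mono less_irrefl nat_neq_iff)

lemma rank_in_image: "finite C \<Longrightarrow> rank_in C ` C = {..<card C}"
  by (rule card_subset_eq)
    (auto simp: rank_in_less_card card_image inj_on_rank_in)

text \<open>Unlike the binomial expansion prod_add, the anchor of position t depends on C
  through the rank of t in C; the induction on n works because a new top element of C has
  rank card C.\<close>
lemma prod_eq_sum_anchored:
  fixes v :: "nat \<Rightarrow> real" and b :: "nat \<Rightarrow> nat \<Rightarrow> real"
  shows "(\<Prod>s<n. v s) = (\<Sum>C\<in>Pow {..<n}.
           (\<Prod>t\<in>C. v t - b (rank_in C t) t) * (\<Prod>s\<in>{..<n}-C. b (rank_in C s) s))"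
proof (induction n)
  case 0
  then show ?case by simp
next
  case (Suc n)
  let ?F = "\<lambda>m C. (\<Prod>t\<in>C. v t - b (rank_in C t) t) * (\<Prod>s\<in>{..<m}-C. b (rank_in C s) s)"
  have pow: "Pow {..<Suc n} = Pow {..<n} \<union> insert n ` Pow {..<n}"
    using Pow_insert[of n "{..<n}"] by (simp add: lessThan_Suc)
  have inj: "inj_on (insert n) (Pow {..<n})"
    by (rule inj_onI) (auto simp: insert_ident subset_eq)
  have without_n: "?F (Suc n) C = ?F n C * b (card C) n" if "C \<subseteq> {..<n}" for C
  proof -
    have "{..<Suc n} - C = insert n ({..<n} - C)" using that by (auto simp: lessThan_Suc)
    then show ?thesis using that by (simp add: rank_in_eq_card)
  qed
  have with_n: "?F (Suc n) (insert n C) = ?F n C * (v n - b (card C) n)" if "C \<subseteq> {..<n}" for C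
  proof -
    have C: "n \<notin> C" "finite C" using that finite_subset by auto
    have "(\<Prod>t\<in>insert n C. v t - b (rank_in (insert n C) t) t)
        = (v n - b (card C) n) * (\<Prod>t\<in>C. v t - b (rank_in C t) t)"
      using C that by (auto simp: rank_in_insert_self rank_in_eq_card rank_in_insert_greater
          intro!: prod.cong)
    moreover have "{..<Suc n} - insert n C = {..<n} - C" by (auto simp: lessThan_Suc)
    moreover have "(\<Prod>s\<in>{..<n}-C. b (rank_in (insert n C) s) s) = (\<Prod>s\<in>{..<n}-C. b (rank_in C s) s)"
      by (rule prod.cong) (auto simp: rank_in_insert_greater)
    ultimately show ?thesis by simp
  qed
  have "(\<Sum>C\<in>Pow {..<Suc n}. ?F (Suc n) C)
      = (\<Sum>C\<in>Pow {..<n}. ?F (Suc n) C) + (\<Sum>C\<in>Pow {..<n}. ?F (Suc n) (insert n C))"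
    unfolding pow by (subst sum.union_disjoint) (auto simp: sum.reindex[OF inj])
  also have "\<dots> = (\<Sum>C\<in>Pow {..<n}. ?F n C * v n)"
    unfolding sum.distrib[symmetric]
    by (rule sum.cong) (auto simp: without_n with_n algebra_simps)
  also have "\<dots> = (\<Prod>s<Suc n. v s)" using Suc by (simp add: sum_distrib_right)
  finally show ?case ..
qed

lemma prod_anchored_diff_eq_0:
  fixes v :: "'k \<Rightarrow> nat \<Rightarrow> real"
  assumes "finite C" "K \<le> card C" "k \<in> \<kappa> ` {..<K}"
  shows "(\<Prod>t\<in>C. v k t - v (\<kappa> (rank_in C t)) t) = 0"
proof -
  obtain j where j: "j < K" "k = \<kappa> j" using assms(3) by auto
  then have "j \<in> rank_in C ` C" using rank_in_image[OF assms(1)] assms(2) by auto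
  then obtain t where "t \<in> C" "rank_in C t = j" by auto
  then show ?thesis using j assms(1) by (intro prod_zero) auto
qed

lemma anchored_bracket_bound:
  fixes v :: "'k \<Rightarrow> nat \<Rightarrow> real"
  assumes C: "finite C" and \<beta>: "\<And>t. t \<in> C \<Longrightarrow> \<beta> t \<ge> 0"
    and small: "\<And>J. J \<subseteq> C \<Longrightarrow> \<bar>\<Sum>k\<in>Ks. c k * (\<Prod>t\<in>J. v k t)\<bar> \<le> \<delta>"
  shows "\<bar>\<Sum>k\<in>Ks. c k * (\<Prod>t\<in>C. v k t - \<beta> t)\<bar> \<le> \<delta> * (\<Sum>J\<in>Pow C. \<Prod>t\<in>C-J. \<beta> t)"
proof -
  have "(\<Prod>t\<in>C. v k t - \<beta> t) = (\<Sum>J\<in>Pow C. (\<Prod>t\<in>J. v k t) * (\<Prod>t\<in>C-J. - \<beta> t))" for k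
    using prod_add[OF C, of "v k" "\<lambda>t. - \<beta> t"] by (simp only: diff_conv_add_uminus)
  then have "(\<Sum>k\<in>Ks. c k * (\<Prod>t\<in>C. v k t - \<beta> t))
      = (\<Sum>k\<in>Ks. \<Sum>J\<in>Pow C. (\<Prod>t\<in>C-J. - \<beta> t) * (c k * (\<Prod>t\<in>J. v k t)))"
    by (simp add: sum_distrib_left mult_ac)
  also have "\<dots> = (\<Sum>J\<in>Pow C. (\<Prod>t\<in>C-J. - \<beta> t) * (\<Sum>k\<in>Ks. c k * (\<Prod>t\<in>J. v k t)))"
    by (subst sum.swap) (simp add: sum_distrib_left)
  also have "\<bar>\<dots>\<bar> \<le> (\<Sum>J\<in>Pow C. \<bar>(\<Prod>t\<in>C-J. - \<beta> t) * (\<Sum>k\<in>Ks. c k * (\<Prod>t\<in>J. v k t))\<bar>)"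
    by (rule sum_abs)
  also have "\<dots> \<le> (\<Sum>J\<in>Pow C. (\<Prod>t\<in>C-J. \<beta> t) * \<delta>)"
  proof (rule sum_mono)
    fix J assume "J \<in> Pow C"
    moreover have "\<bar>\<Prod>t\<in>C-J. - \<beta> t\<bar> = (\<Prod>t\<in>C-J. \<beta> t)"
      unfolding abs_prod using \<beta> by (intro prod.cong) auto
    moreover have "(\<Prod>t\<in>C-J. \<beta> t) \<ge> 0" using \<beta> by (intro prod_nonneg) auto
    ultimately show "\<bar>(\<Prod>t\<in>C-J. - \<beta> t) * (\<Sum>k\<in>Ks. c k * (\<Prod>t\<in>J. v k t))\<bar> \<le> (\<Prod>t\<in>C-J. \<beta> t) * \<delta>"
      using small by (simp add: abs_mult mult_left_mono)
  qed
  finally show ?thesis by (simp add: sum_distrib_left mult_ac)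
qed

text \<open>Expanding every component around the anchors of a set C of positions kills all
  C with at least K elements, since then each component is its own anchor somewhere on C.\<close>
lemma signed_mixture_anchored_decomp:
  fixes v :: "'k \<Rightarrow> nat \<Rightarrow> real" and c :: "'k \<Rightarrow> real"
  assumes "Ks \<subseteq> \<kappa> ` {..<K}"
  shows "(\<Sum>k\<in>Ks. c k * (\<Prod>s<n. v k s))
     = (\<Sum>C\<in>{C\<in>Pow {..<n}. card C < K}.
          (\<Sum>k\<in>Ks. c k * (\<Prod>t\<in>C. v k t - v (\<kappa> (rank_in C t)) t))
          * (\<Prod>s\<in>{..<n}-C. v (\<kappa> (rank_in C s)) s))"
    (is "_ = (\<Sum>C\<in>?Cs. ?X C * ?R C)")
proof -
  have "(\<Sum>k\<in>Ks. c k * (\<Prod>s<n. v k s))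
      = (\<Sum>k\<in>Ks. \<Sum>C\<in>Pow {..<n}. c k * (\<Prod>t\<in>C. v k t - v (\<kappa> (rank_in C t)) t) * ?R C)"
    by (subst prod_eq_sum_anchored[where b = "\<lambda>j. v (\<kappa> j)"]) (simp add: sum_distrib_left mult_ac)
  also have "\<dots> = (\<Sum>C\<in>Pow {..<n}. ?X C * ?R C)"
    by (subst sum.swap) (simp add: sum_distrib_right)
  also have "\<dots> = (\<Sum>C\<in>?Cs. ?X C * ?R C)"
  proof (rule sum.mono_neutral_right)
    show "\<forall>C\<in>Pow {..<n} - ?Cs. ?X C * ?R C = 0"
    proof
      fix C assume "C \<in> Pow {..<n} - ?Cs"
      then have "finite C" "K \<le> card C" by (auto dest: finite_subset)
      then show "?X C * ?R C = 0"
        using assms prod_anchored_diff_eq_0[of C K _ \<kappa> v] by (auto intro!: sum.neutral)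
    qed
  qed auto
  finally show ?thesis .
qed

lemma signed_mixture_prod_bound:
  fixes v :: "'k \<Rightarrow> nat \<Rightarrow> real" and c :: "'k \<Rightarrow> real"
  assumes Ks: "Ks \<subseteq> \<kappa> ` {..<K}"
    and nonneg: "\<And>j t. j < K \<Longrightarrow> t < n \<Longrightarrow> v (\<kappa> j) t \<ge> 0"
    and small: "\<And>J. J \<subseteq> {..<n} \<Longrightarrow> card J < K \<Longrightarrow> \<bar>\<Sum>k\<in>Ks. c k * (\<Prod>t\<in>J. v k t)\<bar> \<le> \<delta>"
  shows "\<bar>\<Sum>k\<in>Ks. c k * (\<Prod>s<n. v k s)\<bar>
     \<le> \<delta> * (\<Sum>C\<in>{C\<in>Pow {..<n}. card C < K}. \<Sum>J\<in>Pow C. \<Prod>s\<in>{..<n}-J. v (\<kappa> (rank_in C s)) s)"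
proof -
  define \<beta> where "\<beta> C s = v (\<kappa> (rank_in C s)) s" for C s
  define Cs where "Cs = {C\<in>Pow {..<n}. card C < K}"
  have C: "finite C" "C \<subseteq> {..<n}" "card C < K" if "C \<in> Cs" for C
    using that finite_subset unfolding Cs_def by auto
  have \<beta>_nonneg: "\<beta> C s \<ge> 0" if "C \<in> Cs" "s < n" for C s
    unfolding \<beta>_def using C[OF that(1)] rank_in_le_card[of C s] that(2)
    by (intro nonneg) linarith+
  have R_nonneg: "(\<Prod>s\<in>{..<n}-C. \<beta> C s) \<ge> 0" if "C \<in> Cs" for C
    using \<beta>_nonneg[OF that] by (intro prod_nonneg) auto
  have "\<bar>\<Sum>k\<in>Ks. c k * (\<Prod>s<n. v k s)\<bar>
      \<le> (\<Sum>C\<in>Cs. \<bar>\<Sum>k\<in>Ks. c k * (\<Prod>t\<in>C. v k t - \<beta> C t)\<bar> * (\<Prod>s\<in>{..<n}-C. \<beta> C s))"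
    unfolding signed_mixture_anchored_decomp[OF Ks] Cs_def[symmetric] \<beta>_def[symmetric]
    by (intro order_trans[OF sum_abs] sum_mono) (simp add: abs_mult R_nonneg)
  also have "\<dots> \<le> (\<Sum>C\<in>Cs. \<delta> * (\<Sum>J\<in>Pow C. \<Prod>t\<in>C-J. \<beta> C t) * (\<Prod>s\<in>{..<n}-C. \<beta> C s))"
  proof (intro sum_mono mult_right_mono anchored_bracket_bound)
    fix C J assume "C \<in> Cs" "J \<subseteq> C"
    with C[of C] show "\<bar>\<Sum>k\<in>Ks. c k * (\<Prod>t\<in>J. v k t)\<bar> \<le> \<delta>"
      by (intro small) (auto dest: card_mono[of C J])
  qed (use C \<beta>_nonneg R_nonneg in blast)+
  also have "\<dots> = \<delta> * (\<Sum>C\<in>Cs. \<Sum>J\<in>Pow C. \<Prod>s\<in>{..<n}-J. \<beta> C s)"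
  proof -
    have "(\<Prod>t\<in>C-J. \<beta> C t) * (\<Prod>s\<in>{..<n}-C. \<beta> C s) = (\<Prod>s\<in>{..<n}-J. \<beta> C s)"
      if "C \<in> Cs" "J \<subseteq> C" for C J
    proof -
      have "{..<n}-J = (C-J) \<union> ({..<n}-C)" using that C by auto
      then show ?thesis using C[OF that(1)] by (simp add: prod.union_disjoint Diff_Int_distrib2)
    qed
    then show ?thesis
      by (simp add: sum_distrib_left sum_distrib_right mult.assoc)
  qed
  finally show ?thesis unfolding Cs_def \<beta>_def .
qed

section \<open>Trajectories and their weights\<close>

definition lists_of_len :: "'b set \<Rightarrow> nat \<Rightarrow> 'b list set" where
  "lists_of_len Z n = {zs. length zs = n \<and> set zs \<subseteq> Z}"

lemma finite_lists_of_len: "finite Z \<Longrightarrow> finite (lists_of_len Z n)"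
  unfolding lists_of_len_def using finite_lists_length_eq[of Z n] by (simp add: conj_commute)

lemma lists_of_len_0: "lists_of_len Z 0 = {[]}"
  unfolding lists_of_len_def by auto

lemma sum_lists_of_len_Suc:
  "(\<Sum>zs\<in>lists_of_len Z (Suc n). g zs) = (\<Sum>zs\<in>lists_of_len Z n. \<Sum>r\<in>Z. g (zs @ [r]))"
proof -
  have img: "lists_of_len Z (Suc n) = (\<lambda>(zs,r). zs @ [r]) ` (lists_of_len Z n \<times> Z)"
  proof
    show "lists_of_len Z (Suc n) \<subseteq> (\<lambda>(zs,r). zs @ [r]) ` (lists_of_len Z n \<times> Z)"
    proof
      fix zs assume zs: "zs \<in> lists_of_len Z (Suc n)"
      then obtain ys r where "zs = ys @ [r]"
        unfolding lists_of_len_def by (metis (mono_tags) length_Suc_conv_rev mem_Collect_eq)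
      with zs show "zs \<in> (\<lambda>(zs,r). zs @ [r]) ` (lists_of_len Z n \<times> Z)"
        unfolding lists_of_len_def by (auto intro!: image_eqI[of _ _ "(ys, r)"])
    qed
  qed (auto simp: lists_of_len_def)
  have inj: "inj_on (\<lambda>(zs,r). zs @ [r]) (lists_of_len Z n \<times> Z)"
    by (rule inj_onI) auto
  show ?thesis
    unfolding img sum.reindex[OF inj] sum.cartesian_product by (simp add: case_prod_beta)
qed

lemma sum_lists_of_len_prod:
  fixes g :: "nat \<Rightarrow> 'b \<Rightarrow> real"
  shows "(\<Sum>zs\<in>lists_of_len Z n. \<Prod>i<n. g i (zs ! i)) = (\<Prod>i<n. \<Sum>r\<in>Z. g i r)"
proof (induction n)
  case 0
  then show ?case by (simp add: lists_of_len_0)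
next
  case (Suc n)
  have "(\<Prod>i<Suc n. g i ((zs @ [r]) ! i)) = (\<Prod>i<n. g i (zs ! i)) * g n r"
    if "zs \<in> lists_of_len Z n" for zs r
    using that unfolding lists_of_len_def by (auto simp: nth_append intro!: prod.cong)
  then have "(\<Sum>zs\<in>lists_of_len Z (Suc n). \<Prod>i<Suc n. g i (zs ! i))
      = (\<Sum>zs\<in>lists_of_len Z n. \<Sum>r\<in>Z. (\<Prod>i<n. g i (zs ! i)) * g n r)"
    unfolding sum_lists_of_len_Suc by (intro sum.cong) auto
  also have "\<dots> = (\<Prod>i<Suc n. \<Sum>r\<in>Z. g i r)"
    by (simp add: sum_product[symmetric] Suc)
  finally show ?case .
qed

definition mk_traj :: "('s \<times> 'a) list \<Rightarrow> real list \<Rightarrow> ('s \<times> 'a \<times> real) list" where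
  "mk_traj x z = map (\<lambda>(p,r). (fst p, snd p, r)) (zip x z)"

lemma length_mk_traj[simp]: "length (mk_traj x z) = min (length x) (length z)"
  unfolding mk_traj_def by simp

lemma nth_mk_traj:
  "t < length x \<Longrightarrow> t < length z \<Longrightarrow> mk_traj x z ! t = (fst (x!t), snd (x!t), z!t)"
  unfolding mk_traj_def by simp

lemma take_mk_traj: "take t (mk_traj x z) = mk_traj (take t x) (take t z)"
  unfolding mk_traj_def by (simp add: take_map take_zip)

lemma mk_traj_snoc:
  "length x = length z \<Longrightarrow> mk_traj (x @ [p]) (z @ [r]) = mk_traj x z @ [(fst p, snd p, r)]"
  unfolding mk_traj_def by simp

lemma sa_part_mk_traj: "length x = length z \<Longrightarrow> sa_part (mk_traj x z) = x"
  unfolding mk_traj_def sa_part_def by (induction x z rule: list_induct2) auto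

lemma rewards_mk_traj: "length x = length z \<Longrightarrow> map (\<lambda>q. snd (snd q)) (mk_traj x z) = z"
  unfolding mk_traj_def by (induction x z rule: list_induct2) auto

lemma mk_traj_sa_part_rewards: "mk_traj (sa_part \<tau>) (map (\<lambda>q. snd (snd q)) \<tau>) = \<tau>"
  unfolding mk_traj_def sa_part_def by (induction \<tau>) auto

lemma set_mk_traj: "set x \<subseteq> S \<times> A \<Longrightarrow> set z \<subseteq> Z \<Longrightarrow> set (mk_traj x z) \<subseteq> S \<times> A \<times> Z"
  unfolding mk_traj_def by (auto dest: set_zip_leftD set_zip_rightD)

lemma sum_trajs_mk_traj:
  assumes E: "E \<subseteq> {x. length x = H \<and> set x \<subseteq> S \<times> A}"
  shows "(\<Sum>\<tau>\<in>{\<tau>\<in>trajs S A Z H. sa_part \<tau> \<in> E}. g \<tau>)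
       = (\<Sum>x\<in>E. \<Sum>z\<in>lists_of_len Z H. g (mk_traj x z))"
proof -
  have "bij_betw (\<lambda>(x,z). mk_traj x z) (E \<times> lists_of_len Z H) {\<tau>\<in>trajs S A Z H. sa_part \<tau> \<in> E}"
  proof (rule bij_betw_byWitness[where f' = "\<lambda>\<tau>. (sa_part \<tau>, map (\<lambda>q. snd (snd q)) \<tau>)"])
    show "\<forall>q\<in>E \<times> lists_of_len Z H. (sa_part ((\<lambda>(x,z). mk_traj x z) q),
        map (\<lambda>q. snd (snd q)) ((\<lambda>(x,z). mk_traj x z) q)) = q"
      using E by (auto simp: lists_of_len_def sa_part_mk_traj rewards_mk_traj)
    show "(\<lambda>(x,z). mk_traj x z) ` (E \<times> lists_of_len Z H) \<subseteq> {\<tau>\<in>trajs S A Z H. sa_part \<tau> \<in> E}"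
    proof
      fix \<tau> assume "\<tau> \<in> (\<lambda>(x,z). mk_traj x z) ` (E \<times> lists_of_len Z H)"
      then obtain x z where "\<tau> = mk_traj x z" "x \<in> E" "z \<in> lists_of_len Z H" by auto
      moreover from this have "length x = H" "set x \<subseteq> S \<times> A" "length z = H" "set z \<subseteq> Z"
        using E unfolding lists_of_len_def by auto
      ultimately show "\<tau> \<in> {\<tau>\<in>trajs S A Z H. sa_part \<tau> \<in> E}"
        unfolding trajs_def using set_mk_traj[of x S A z Z] sa_part_mk_traj[of x z] by auto
    qed
    show "(\<lambda>\<tau>. (sa_part \<tau>, map (\<lambda>q. snd (snd q)) \<tau>)) ` {\<tau>\<in>trajs S A Z H. sa_part \<tau> \<in> E}
        \<subseteq> E \<times> lists_of_len Z H"
      by (force simp: trajs_def lists_of_len_def)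
  qed (simp add: mk_traj_sa_part_rewards)
  then show ?thesis
    by (simp add: sum.reindex_bij_betw[symmetric] sum.cartesian_product case_prod_beta)
qed

definition policy_weight ::
  "(('s \<times> 'a \<times> real) list \<Rightarrow> 's \<Rightarrow> 'a \<Rightarrow> real) \<Rightarrow> ('s \<times> 'a) list \<Rightarrow> real list \<Rightarrow> real" where
  "policy_weight \<pi> x z = (\<Prod>t<length x. \<pi> (take t (mk_traj x z)) (fst (x!t)) (snd (x!t)))"

definition dynamics_weight :: "('s \<Rightarrow> 'a \<Rightarrow> 's \<Rightarrow> real) \<Rightarrow> ('s \<Rightarrow> real) \<Rightarrow> ('s \<times> 'a) list \<Rightarrow> real" where
  "dynamics_weight T \<nu> x = \<nu> (fst (x!0)) * (\<Prod>t<length x - 1. T (fst (x!t)) (snd (x!t)) (fst (x!Suc t)))"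

lemma traj_prob_mk_traj:
  assumes "length z = length x" "x \<noteq> []"
  shows "traj_prob T \<nu> M w \<mu> \<pi> (mk_traj x z)
       = dynamics_weight T \<nu> x * policy_weight \<pi> x z * moment M w \<mu> x z"
proof -
  have n: "\<And>t. t < length x \<Longrightarrow> mk_traj x z ! t = (fst (x!t), snd (x!t), z!t)"
    using assms by (simp add: nth_mk_traj)
  have "(\<Prod>t<length x - 1. T (fst (mk_traj x z ! t)) (fst (snd (mk_traj x z ! t))) (fst (mk_traj x z ! Suc t)))
      = (\<Prod>t<length x - 1. T (fst (x!t)) (snd (x!t)) (fst (x!Suc t)))"
    by (rule prod.cong) (auto simp: n)
  moreover have "(\<Prod>t<length x. \<pi> (take t (mk_traj x z)) (fst (mk_traj x z ! t)) (fst (snd (mk_traj x z ! t))))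
      = policy_weight \<pi> x z"
    unfolding policy_weight_def by (rule prod.cong) (auto simp: n)
  moreover have "(\<Sum>m<M. w m * (\<Prod>t<length x. \<mu> m (fst (mk_traj x z ! t)) (fst (snd (mk_traj x z ! t)))
        (snd (snd (mk_traj x z ! t))))) = moment M w \<mu> x z"
    unfolding moment_def by (intro sum.cong refl arg_cong2[where f="(*)"] prod.cong) (auto simp: n)
  ultimately show ?thesis
    using assms n[of 0] unfolding traj_prob_def Let_def dynamics_weight_def by simp
qed

lemma policy_weight_snoc:
  assumes "length z = length x"
  shows "policy_weight \<pi> (x @ [p]) (z @ [r]) = policy_weight \<pi> x z * \<pi> (mk_traj x z) (fst p) (snd p)"
proof -
  have "(\<Prod>t<length x. \<pi> (take t (mk_traj (x @ [p]) (z @ [r]))) (fst ((x @ [p])!t)) (snd ((x @ [p])!t)))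
      = policy_weight \<pi> x z"
    unfolding policy_weight_def using assms by (intro prod.cong refl) (auto simp: mk_traj_snoc nth_append)
  then show ?thesis unfolding policy_weight_def using assms by (simp add: mk_traj_snoc)
qed

lemma le_1_of_sum_eq_1:
  fixes g :: "'b \<Rightarrow> real"
  assumes "finite X" "\<forall>y\<in>X. g y \<ge> 0" "sum g X = 1" "y \<in> X"
  shows "g y \<le> 1"
  using member_le_sum[of y X g] assms by auto

lemma policy_weight_nonneg:
  assumes "\<pi> \<in> policies S A" "set x \<subseteq> S \<times> A"
  shows "0 \<le> policy_weight \<pi> x z"
  unfolding policy_weight_def
proof (rule prod_nonneg)
  fix t assume "t \<in> {..<length x}"
  then have "fst (x!t) \<in> S" "snd (x!t) \<in> A" using assms(2) nth_mem by fastforce+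
  then show "0 \<le> \<pi> (take t (mk_traj x z)) (fst (x!t)) (snd (x!t))"
    using assms(1) unfolding policies_def by auto
qed

lemma policy_weight_bounds:
  assumes "\<pi> \<in> policies S A" "finite A" "set x \<subseteq> S \<times> A"
  shows "0 \<le> policy_weight \<pi> x z \<and> policy_weight \<pi> x z \<le> 1"
proof -
  have "0 \<le> \<pi> h (fst (x!t)) (snd (x!t)) \<and> \<pi> h (fst (x!t)) (snd (x!t)) \<le> 1"
    if "t < length x" for h t
  proof -
    have "fst (x!t) \<in> S" "snd (x!t) \<in> A" using assms(3) that nth_mem by fastforce+
    then show ?thesis using assms(1,2) le_1_of_sum_eq_1[of A "\<pi> h (fst (x!t))" "snd (x!t)"]
      unfolding policies_def by auto
  qed
  then show ?thesis unfolding policy_weight_def by (auto intro: prod_nonneg prod_le_1)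
qed

lemma dynamics_weight_bounds:
  assumes "rmmdp S A Z T \<nu> M w \<mu>" "x \<noteq> []" "set x \<subseteq> S \<times> A"
  shows "0 \<le> dynamics_weight T \<nu> x \<and> dynamics_weight T \<nu> x \<le> 1"
proof -
  have fS: "finite S" using assms(1) unfolding rmmdp_def by auto
  have xi: "fst (x!t) \<in> S" "snd (x!t) \<in> A" if "t < length x" for t
    using assms(3) that nth_mem by fastforce+
  have "0 \<le> \<nu> s \<and> \<nu> s \<le> 1" if "s \<in> S" for s
    using assms(1) le_1_of_sum_eq_1[OF fS, of \<nu> s] that unfolding rmmdp_def by auto
  moreover have "0 \<le> T s a s' \<and> T s a s' \<le> 1" if "s \<in> S" "a \<in> A" "s' \<in> S" for s a s'
    using assms(1) le_1_of_sum_eq_1[OF fS, of "T s a" s'] that unfolding rmmdp_def by auto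
  ultimately show ?thesis
    unfolding dynamics_weight_def using assms(2) xi
    by (auto intro!: mult_le_one mult_nonneg_nonneg prod_nonneg prod_le_1)
qed

lemma moment_bounds:
  assumes "rmmdp S A Z T \<nu> M w \<mu>" "set x \<subseteq> S \<times> A" "set z \<subseteq> Z" "length z = length x"
  shows "0 \<le> moment M w \<mu> x z \<and> moment M w \<mu> x z \<le> 1"
proof -
  have fZ: "finite Z" and w_nonneg: "\<forall>m<M. w m \<ge> 0" and w_sum: "(\<Sum>m<M. w m) = 1"
    using assms(1) unfolding rmmdp_def by auto
  have "0 \<le> \<mu> m (fst (x!i)) (snd (x!i)) (z!i) \<and> \<mu> m (fst (x!i)) (snd (x!i)) (z!i) \<le> 1"
    if "m < M" "i < length x" for m i
  proof -
    have "fst (x!i) \<in> S" "snd (x!i) \<in> A" "z!i \<in> Z"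
      using assms(2-4) that(2) nth_mem by fastforce+
    then show ?thesis using assms(1) that(1) le_1_of_sum_eq_1[OF fZ, of "\<mu> m (fst (x!i)) (snd (x!i))" "z!i"]
      unfolding rmmdp_def by auto
  qed
  then have "0 \<le> (\<Prod>i<length x. \<mu> m (fst (x!i)) (snd (x!i)) (z!i))
      \<and> (\<Prod>i<length x. \<mu> m (fst (x!i)) (snd (x!i)) (z!i)) \<le> 1" if "m < M" for m
    using that by (auto intro: prod_nonneg prod_le_1)
  then have "0 \<le> moment M w \<mu> x z" "moment M w \<mu> x z \<le> (\<Sum>m<M. w m)"
    unfolding moment_def using w_nonneg by (auto intro!: sum_nonneg sum_mono intro: mult_right_le_one_le)
  then show ?thesis using w_sum by simp
qed

lemma sum_moment_eq_1:
  assumes "rmmdp S A Z T \<nu> M w \<mu>" "length x = H" "set x \<subseteq> S \<times> A"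
  shows "(\<Sum>z\<in>lists_of_len Z H. moment M w \<mu> x z) = 1"
proof -
  have "(\<Sum>z\<in>lists_of_len Z H. moment M w \<mu> x z)
      = (\<Sum>m<M. w m * (\<Sum>z\<in>lists_of_len Z H. \<Prod>i<H. \<mu> m (fst (x!i)) (snd (x!i)) (z!i)))"
    unfolding moment_def assms(2) by (simp add: sum.swap[of _ "lists_of_len Z H"] sum_distrib_left)
  also have "\<dots> = (\<Sum>m<M. w m * (\<Prod>i<H. \<Sum>r\<in>Z. \<mu> m (fst (x!i)) (snd (x!i)) r))"
  proof (rule sum.cong[OF refl])
    fix m
    show "w m * (\<Sum>z\<in>lists_of_len Z H. \<Prod>i<H. \<mu> m (fst (x!i)) (snd (x!i)) (z!i))
        = w m * (\<Prod>i<H. \<Sum>r\<in>Z. \<mu> m (fst (x!i)) (snd (x!i)) r)"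
      using sum_lists_of_len_prod[of "\<lambda>i r. \<mu> m (fst (x!i)) (snd (x!i)) r"] by simp
  qed
  also have "\<dots> = (\<Sum>m<M. w m)"
  proof (intro sum.cong refl)
    fix m assume m: "m \<in> {..<M}"
    have "(\<Sum>r\<in>Z. \<mu> m (fst (x!i)) (snd (x!i)) r) = 1" if "i < H" for i
      using assms that m nth_mem[of i x] unfolding rmmdp_def by (cases "x!i") auto
    then show "w m * (\<Prod>i<H. \<Sum>r\<in>Z. \<mu> m (fst (x!i)) (snd (x!i)) r) = w m" by simp
  qed
  also have "\<dots> = 1" using assms(1) unfolding rmmdp_def by auto
  finally show ?thesis .
qed

lemma event_prob_eq_weights:
  assumes "E \<subseteq> {x. length x = H \<and> set x \<subseteq> S \<times> A}" "H > 0"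
  shows "event_prob S A Z H T \<nu> M w \<mu> \<pi> E
       = (\<Sum>x\<in>E. \<Sum>z\<in>lists_of_len Z H. dynamics_weight T \<nu> x * policy_weight \<pi> x z * moment M w \<mu> x z)"
  unfolding event_prob_def sum_trajs_mk_traj[OF assms(1)]
  using assms by (intro sum.cong refl traj_prob_mk_traj) (auto simp: lists_of_len_def)

lemma event_prob_le_Sup:
  assumes "rmmdp S A Z T \<nu> M w \<mu>" "E \<subseteq> {x. length x = H \<and> set x \<subseteq> S \<times> A}" "H > 0"
    "\<pi> \<in> policies S A"
  shows "0 \<le> event_prob S A Z H T \<nu> M w \<mu> \<pi> E"
    "event_prob S A Z H T \<nu> M w \<mu> \<pi> E \<le> Sup ((\<lambda>\<pi>'. event_prob S A Z H T \<nu> M w \<mu> \<pi>' E) ` policies S A)"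
proof -
  have fA: "finite A" using assms(1) unfolding rmmdp_def by auto
  have term_bounds: "0 \<le> dynamics_weight T \<nu> x * policy_weight \<pi>' x z * moment M w \<mu> x z
      \<and> dynamics_weight T \<nu> x * policy_weight \<pi>' x z * moment M w \<mu> x z \<le> 1"
    if "\<pi>' \<in> policies S A" "x \<in> E" "z \<in> lists_of_len Z H" for \<pi>' x z
  proof -
    have x: "length x = H" "set x \<subseteq> S \<times> A" "x \<noteq> []" using assms(2,3) that(2) by auto
    moreover have "set z \<subseteq> Z" "length z = length x" using that(3) x unfolding lists_of_len_def by auto
    ultimately show ?thesis
      using dynamics_weight_bounds[OF assms(1), of x] policy_weight_bounds[OF that(1) fA, of x z]
        moment_bounds[OF assms(1), of x z] by (auto intro: mult_le_one)
  qed
  have "event_prob S A Z H T \<nu> M w \<mu> \<pi>' E \<le> real (card E) * real (card (lists_of_len Z H))"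
    if "\<pi>' \<in> policies S A" for \<pi>'
  proof -
    have "event_prob S A Z H T \<nu> M w \<mu> \<pi>' E \<le> (\<Sum>x\<in>E. \<Sum>z\<in>lists_of_len Z H. 1)"
      unfolding event_prob_eq_weights[OF assms(2,3)]
      using term_bounds[OF that] by (intro sum_mono) blast
    then show ?thesis by simp
  qed
  then have "bdd_above ((\<lambda>\<pi>'. event_prob S A Z H T \<nu> M w \<mu> \<pi>' E) ` policies S A)"
    by (intro bdd_aboveI2)
  then show "event_prob S A Z H T \<nu> M w \<mu> \<pi> E \<le> Sup ((\<lambda>\<pi>'. event_prob S A Z H T \<nu> M w \<mu> \<pi>' E) ` policies S A)"
    using assms(4) by (intro cSup_upper) auto
  show "0 \<le> event_prob S A Z H T \<nu> M w \<mu> \<pi> E"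
    unfolding event_prob_eq_weights[OF assms(2,3)] using term_bounds[OF assms(4)] by (auto intro!: sum_nonneg)
qed

section \<open>Simulated policies\<close>

definition reward_kernels ::
  "'s set \<Rightarrow> 'a set \<Rightarrow> real set \<Rightarrow> (nat \<Rightarrow> 's \<times> 'a \<Rightarrow> real \<Rightarrow> real) \<Rightarrow> bool" where
  "reward_kernels S A Z f \<longleftrightarrow> (\<forall>j. \<forall>p\<in>S\<times>A. (\<forall>r\<in>Z. f j p r \<ge> 0) \<and> sum (f j p) Z = 1)"

definition averaged_policy_weight ::
  "real set \<Rightarrow> (nat \<Rightarrow> 's \<times> 'a \<Rightarrow> real \<Rightarrow> real) \<Rightarrow> (('s \<times> 'a \<times> real) list \<Rightarrow> 's \<Rightarrow> 'a \<Rightarrow> real)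
   \<Rightarrow> ('s \<times> 'a) list \<Rightarrow> real" where
  "averaged_policy_weight Z f \<pi> y =
     (\<Sum>z\<in>lists_of_len Z (length y). (\<Prod>j<length y. f j (y!j) (z!j)) * policy_weight \<pi> y z)"

text \<open>The simulated policy ignores the observed rewards and plays the conditional action
  probabilities of \<pi> when the rewards at step j are drawn from f j instead.  Off the
  support of these probabilities its uniform choice is arbitrary.\<close>
definition simulated_policy ::
  "'s set \<Rightarrow> 'a set \<Rightarrow> real set \<Rightarrow> (nat \<Rightarrow> 's \<times> 'a \<Rightarrow> real \<Rightarrow> real)
   \<Rightarrow> (('s \<times> 'a \<times> real) list \<Rightarrow> 's \<Rightarrow> 'a \<Rightarrow> real) \<Rightarrow> ('s \<times> 'a \<times> real) list \<Rightarrow> 's \<Rightarrow> 'a \<Rightarrow> real" where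
  "simulated_policy S A Z f \<pi> h s a =
     (if set (sa_part h) \<subseteq> S \<times> A \<and> averaged_policy_weight Z f \<pi> (sa_part h) \<noteq> 0
      then averaged_policy_weight Z f \<pi> (sa_part h @ [(s,a)]) / averaged_policy_weight Z f \<pi> (sa_part h)
      else 1 / real (card A))"

lemma averaged_policy_weight_term_nonneg:
  assumes "\<pi> \<in> policies S A" "set y \<subseteq> S \<times> A" "reward_kernels S A Z f" "z \<in> lists_of_len Z (length y)"
  shows "(\<Prod>j<length y. f j (y!j) (z!j)) * policy_weight \<pi> y z \<ge> 0"
proof -
  have "f j (y!j) (z!j) \<ge> 0" if "j < length y" for j
  proof -
    have "y!j \<in> S \<times> A" "z!j \<in> Z"
      using assms(2,4) that nth_mem unfolding lists_of_len_def by fastforce+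
    then show ?thesis using assms(3) unfolding reward_kernels_def by fastforce
  qed
  then show ?thesis
    using policy_weight_nonneg[OF assms(1,2), of z] by (auto intro!: mult_nonneg_nonneg prod_nonneg)
qed

lemma averaged_policy_weight_nonneg:
  assumes "\<pi> \<in> policies S A" "set y \<subseteq> S \<times> A" "reward_kernels S A Z f"
  shows "averaged_policy_weight Z f \<pi> y \<ge> 0"
  unfolding averaged_policy_weight_def
  using averaged_policy_weight_term_nonneg[OF assms] by (intro sum_nonneg) auto

lemma averaged_policy_weight_snoc:
  assumes "reward_kernels S A Z f" "p \<in> S \<times> A"
  shows "averaged_policy_weight Z f \<pi> (y @ [p])
       = (\<Sum>z\<in>lists_of_len Z (length y).
            (\<Prod>j<length y. f j (y!j) (z!j)) * policy_weight \<pi> y z * \<pi> (mk_traj y z) (fst p) (snd p))"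
proof -
  have "sum (f (length y) p) Z = 1"
    using assms unfolding reward_kernels_def by blast
  moreover have "averaged_policy_weight Z f \<pi> (y @ [p]) = (\<Sum>z\<in>lists_of_len Z (length y). \<Sum>r\<in>Z.
      ((\<Prod>j<length y. f j (y!j) (z!j)) * policy_weight \<pi> y z * \<pi> (mk_traj y z) (fst p) (snd p))
      * f (length y) p r)"
    unfolding averaged_policy_weight_def length_append_singleton sum_lists_of_len_Suc
  proof (intro sum.cong refl)
    fix z r assume "z \<in> lists_of_len Z (length y)"
    then have l: "length z = length y" unfolding lists_of_len_def by auto
    have "(\<Prod>j<length y. f j ((y @ [p])!j) ((z @ [r])!j)) = (\<Prod>j<length y. f j (y!j) (z!j))"
      by (rule prod.cong) (auto simp: nth_append l)
    then show "(\<Prod>j<Suc (length y). f j ((y @ [p])!j) ((z @ [r])!j)) * policy_weight \<pi> (y @ [p]) (z @ [r])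
       = ((\<Prod>j<length y. f j (y!j) (z!j)) * policy_weight \<pi> y z * \<pi> (mk_traj y z) (fst p) (snd p))
         * f (length y) p r"
      by (simp add: nth_append l policy_weight_snoc)
  qed
  ultimately show ?thesis by (simp add: sum_distrib_left[symmetric])
qed

lemma simulated_policy_in_policies:
  fixes S :: "'s set" and A :: "'a set"
  assumes "finite A" "A \<noteq> {}" "reward_kernels S A Z f" "\<pi> \<in> policies S A"
  shows "simulated_policy S A Z f \<pi> \<in> policies S A"
  unfolding policies_def
proof (intro CollectI allI ballI conjI)
  fix h :: "('s \<times> 'a \<times> real) list" and s :: 's assume s: "s \<in> S"
  define y where "y = sa_part h"
  show "simulated_policy S A Z f \<pi> h s a \<ge> 0" if "a \<in> A" for a
  proof (cases "set y \<subseteq> S \<times> A \<and> averaged_policy_weight Z f \<pi> y \<noteq> 0")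
    case True
    then have "set (y @ [(s,a)]) \<subseteq> S \<times> A" using s that by auto
    then show ?thesis unfolding simulated_policy_def y_def[symmetric] using True
      averaged_policy_weight_nonneg[OF assms(4) _ assms(3)] by (simp add: divide_nonneg_nonneg)
  qed (simp add: simulated_policy_def y_def[symmetric])
  show "(\<Sum>a\<in>A. simulated_policy S A Z f \<pi> h s a) = 1"
  proof (cases "set y \<subseteq> S \<times> A \<and> averaged_policy_weight Z f \<pi> y \<noteq> 0")
    case True
    have "(\<Sum>a\<in>A. averaged_policy_weight Z f \<pi> (y @ [(s,a)]))
        = (\<Sum>z\<in>lists_of_len Z (length y). (\<Prod>j<length y. f j (y!j) (z!j)) * policy_weight \<pi> y z
            * (\<Sum>a\<in>A. \<pi> (mk_traj y z) s a))"
      using averaged_policy_weight_snoc[OF assms(3)] s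
      by (simp add: sum.swap[of _ A] sum_distrib_left)
    also have "\<dots> = averaged_policy_weight Z f \<pi> y"
      unfolding averaged_policy_weight_def using assms(4) s unfolding policies_def by simp
    finally show ?thesis using True unfolding simulated_policy_def y_def[symmetric]
      by (simp add: sum_divide_distrib[symmetric])
  next
    case False
    then have "simulated_policy S A Z f \<pi> h s a = 1 / real (card A)" for a
      unfolding simulated_policy_def y_def by auto
    then show ?thesis using assms(1,2) by simp
  qed
qed

lemma prod_simulated_policy:
  assumes "finite Z" "reward_kernels S A Z f" "\<pi> \<in> policies S A" "set x \<subseteq> S \<times> A" "length z = length x"
    "n \<le> length x"
  shows "(\<Prod>t<n. simulated_policy S A Z f \<pi> (take t (mk_traj x z)) (fst (x!t)) (snd (x!t)))
       = averaged_policy_weight Z f \<pi> (take n x)"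
  using assms(6)
proof (induction n)
  case 0
  then show ?case by (simp add: averaged_policy_weight_def lists_of_len_0 policy_weight_def)
next
  case (Suc n)
  define y where "y = take n x"
  have n: "n < length x" using Suc by simp
  have sa: "sa_part (take n (mk_traj x z)) = y"
    unfolding take_mk_traj y_def using assms(5) by (simp add: sa_part_mk_traj)
  have y: "set y \<subseteq> S \<times> A" using assms(4) unfolding y_def by (meson order_trans set_take_subset)
  have p: "x!n \<in> S \<times> A" using assms(4) n nth_mem by blast
  have take_Suc: "take (Suc n) x = y @ [x!n]" unfolding y_def using n by (simp add: take_Suc_conv_app_nth)
  have IH: "(\<Prod>t<n. simulated_policy S A Z f \<pi> (take t (mk_traj x z)) (fst (x!t)) (snd (x!t)))
      = averaged_policy_weight Z f \<pi> y"
    using Suc y_def by simp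
  show ?case
  proof (cases "averaged_policy_weight Z f \<pi> y = 0")
    case False
    then show ?thesis using IH y unfolding take_Suc by (simp add: simulated_policy_def sa)
  next
    case True
    have zero: "\<forall>z'\<in>lists_of_len Z (length y). (\<Prod>j<length y. f j (y!j) (z'!j)) * policy_weight \<pi> y z' = 0"
      using True unfolding averaged_policy_weight_def
      by (subst sum_nonneg_eq_0_iff[symmetric])
        (auto simp: finite_lists_of_len[OF assms(1)] intro: averaged_policy_weight_term_nonneg[OF assms(3) y assms(2)])
    then have "averaged_policy_weight Z f \<pi> (y @ [x!n]) = 0"
      unfolding averaged_policy_weight_snoc[OF assms(2) p] by (intro sum.neutral ballI) (simp add: zero)
    then show ?thesis using IH True unfolding take_Suc by simp
  qed
qed

lemma event_prob_simulated_policy: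
  assumes "E \<subseteq> {x. length x = H \<and> set x \<subseteq> S \<times> A}" "H > 0" "rmmdp S A Z T \<nu> M w \<mu>"
    "reward_kernels S A Z f" "\<pi> \<in> policies S A"
  shows "event_prob S A Z H T \<nu> M w \<mu> (simulated_policy S A Z f \<pi>) E
       = (\<Sum>x\<in>E. dynamics_weight T \<nu> x * averaged_policy_weight Z f \<pi> x)"
  unfolding event_prob_eq_weights[OF assms(1,2)]
proof (intro sum.cong refl)
  fix x assume "x \<in> E"
  then have x: "length x = H" "set x \<subseteq> S \<times> A" using assms(1) by auto
  have "policy_weight (simulated_policy S A Z f \<pi>) x z = averaged_policy_weight Z f \<pi> x"
    if "z \<in> lists_of_len Z H" for z
    using that prod_simulated_policy[OF _ assms(4,5) x(2), of z "length x"] x assms(3)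
    unfolding policy_weight_def lists_of_len_def rmmdp_def by simp
  then show "(\<Sum>z\<in>lists_of_len Z H. dynamics_weight T \<nu> x * policy_weight (simulated_policy S A Z f \<pi>) x z
        * moment M w \<mu> x z) = dynamics_weight T \<nu> x * averaged_policy_weight Z f \<pi> x"
    using sum_moment_eq_1[OF assms(3) x] by (simp add: sum_distrib_left[symmetric])
qed

section \<open>Moment differences along a trajectory\<close>

lemma prod_nths:
  fixes G :: "'x \<Rightarrow> 'y \<Rightarrow> real"
  assumes "length x = length z"
  shows "(\<Prod>i<length (nths x J). G (nths x J ! i) (nths z J ! i))
       = (\<Prod>t\<in>{t. t < length x \<and> t \<in> J}. G (x!t) (z!t))"
  using assms
proof (induction x z arbitrary: J rule: list_induct2)
  case Nil
  then show ?case by simp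
next
  case (Cons a x' b z' J)
  define J' where "J' = {j. Suc j \<in> J}"
  have IH: "(\<Prod>i<length (nths x' J'). G (nths x' J' ! i) (nths z' J' ! i))
      = (\<Prod>t\<in>{t. t < length x' \<and> t \<in> J'}. G (x'!t) (z'!t))"
    by (rule Cons.IH)
  have len: "length (nths x' J') = length (nths z' J')" using Cons.hyps by (simp add: length_nths)
  have shift: "(\<Prod>t\<in>Suc ` {t. t < length x' \<and> t \<in> J'}. G ((a#x')!t) ((b#z')!t))
      = (\<Prod>t\<in>{t. t < length x' \<and> t \<in> J'}. G (x'!t) (z'!t))"
    by (subst prod.reindex) auto
  show ?case
  proof (cases "0 \<in> J")
    case True
    have positions: "{t. t < length (a#x') \<and> t \<in> J} = insert 0 (Suc ` {t. t < length x' \<and> t \<in> J'})"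
      using True unfolding J'_def by (auto simp: gr0_conv_Suc)
        (metis Suc_less_eq gr0_implies_Suc image_iff mem_Collect_eq neq0_conv)
    have "nths (a#x') J = a # nths x' J'" "nths (b#z') J = b # nths z' J'"
      using True unfolding J'_def by (simp_all add: nths_Cons)
    then have "(\<Prod>i<length (nths (a#x') J). G (nths (a#x') J ! i) (nths (b#z') J ! i))
        = G a b * (\<Prod>i<length (nths x' J'). G (nths x' J' ! i) (nths z' J' ! i))"
      by (simp add: prod.lessThan_Suc_shift len del: prod.lessThan_Suc)
    then show ?thesis
      unfolding positions IH shift[symmetric] by (subst prod.insert) auto
  next
    case False
    have positions: "{t. t < length (a#x') \<and> t \<in> J} = Suc ` {t. t < length x' \<and> t \<in> J'}"
      using False unfolding J'_def by (auto simp: gr0_conv_Suc)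
        (metis Suc_less_eq gr0_implies_Suc image_iff mem_Collect_eq neq0_conv)
    have "nths (a#x') J = nths x' J'" "nths (b#z') J = nths z' J'"
      using False unfolding J'_def by (simp_all add: nths_Cons)
    then show ?thesis unfolding positions shift by (simp add: IH)
  qed
qed

lemma nths_nths_rank_in:
  assumes "finite P" "J \<subseteq> P"
  shows "nths (nths l P) (rank_in P ` J) = nths l J"
proof -
  have "{i \<in> P. \<exists>j \<in> rank_in P ` J. rank_in P i = j} = J"
  proof (intro equalityI subsetI)
    fix i assume "i \<in> {i \<in> P. \<exists>j \<in> rank_in P ` J. rank_in P i = j}"
    then obtain j where "i \<in> P" "j \<in> J" "rank_in P i = rank_in P j" by auto
    moreover from this have "i = j"
      using inj_onD[OF inj_on_rank_in[OF assms(1)]] assms(2) by blast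
    ultimately show "i \<in> J" by simp
  next
    fix i assume "i \<in> J"
    then show "i \<in> {i \<in> P. \<exists>j \<in> rank_in P ` J. rank_in P i = j}" using assms(2) by blast
  qed
  then show ?thesis unfolding nths_nths rank_in_def[symmetric] by simp
qed

lemma Etot_moment_diff_le:
  assumes x: "x \<in> Etot S A H d (Xset S A Z d \<delta> M1 w1 \<mu>1 M2 w2 \<mu>2)" and "d \<le> H"
    and J: "J \<subseteq> {..<H}" "card J \<le> d" and z: "z \<in> lists_of_len Z H"
  shows "\<bar>moment M1 w1 \<mu>1 (nths x J) (nths z J) - moment M2 w2 \<mu>2 (nths x J) (nths z J)\<bar> \<le> \<delta>"
proof -
  obtain P where P: "J \<subseteq> P" "P \<subseteq> {..<H}" "card P = d"
    using exists_subset_between[of J d "{..<H}"] J \<open>d \<le> H\<close> by auto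
  have "finite P" using P(2) finite_subset by blast
  have z: "length z = H" "set z \<subseteq> Z" using z unfolding lists_of_len_def by auto
  have "\<forall>P\<subseteq>{..<H}. card P = d \<longrightarrow> nths x P \<in> Xset S A Z d \<delta> M1 w1 \<mu>1 M2 w2 \<mu>2"
    using x unfolding Etot_def by blast
  then have "nths x P \<in> Xset S A Z d \<delta> M1 w1 \<mu>1 M2 w2 \<mu>2" using P(2,3) by blast
  then have close: "\<forall>zs. length zs = d \<and> set zs \<subseteq> Z \<longrightarrow> (\<forall>I\<subseteq>{..<d}.
      \<bar>moment M1 w1 \<mu>1 (nths (nths x P) I) (nths zs I) - moment M2 w2 \<mu>2 (nths (nths x P) I) (nths zs I)\<bar> \<le> \<delta>)"
    unfolding Xset_def mem_Collect_eq by (elim conjE)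
  have "{i. i < length z \<and> i \<in> P} = P" using P(2) z(1) by auto
  then have "length (nths z P) = d" using P(3) by (simp add: length_nths)
  moreover have "set (nths z P) \<subseteq> Z" using order_trans[OF set_nths_subset z(2)] .
  moreover have "rank_in P ` J \<subseteq> {..<d}"
    using rank_in_less_card[OF \<open>finite P\<close>] P by auto
  ultimately have "\<bar>moment M1 w1 \<mu>1 (nths (nths x P) (rank_in P ` J)) (nths (nths z P) (rank_in P ` J))
        - moment M2 w2 \<mu>2 (nths (nths x P) (rank_in P ` J)) (nths (nths z P) (rank_in P ` J))\<bar> \<le> \<delta>"
    using close by blast
  then show ?thesis unfolding nths_nths_rank_in[OF \<open>finite P\<close> P(1)] .
qed

text \<open>The difference of the two mixtures as one signed mixture, whose M1 + M2 components
  are enumerated by joint_ctx.\<close>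
definition joint_ctx :: "nat \<Rightarrow> nat \<Rightarrow> nat + nat" where
  "joint_ctx M1 j = (if j < M1 then Inl j else Inr (j - M1))"

definition joint_ctxs :: "nat \<Rightarrow> nat \<Rightarrow> (nat + nat) set" where
  "joint_ctxs M1 M2 = Inl ` {..<M1} \<union> Inr ` {..<M2}"

definition signed_weight :: "(nat \<Rightarrow> real) \<Rightarrow> (nat \<Rightarrow> real) \<Rightarrow> nat + nat \<Rightarrow> real" where
  "signed_weight w1 w2 k = (case k of Inl m \<Rightarrow> w1 m | Inr m \<Rightarrow> - w2 m)"

definition joint_reward ::
  "(nat \<Rightarrow> 's \<Rightarrow> 'a \<Rightarrow> real \<Rightarrow> real) \<Rightarrow> (nat \<Rightarrow> 's \<Rightarrow> 'a \<Rightarrow> real \<Rightarrow> real) \<Rightarrow> nat + nat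
   \<Rightarrow> 's \<times> 'a \<Rightarrow> real \<Rightarrow> real" where
  "joint_reward \<mu>1 \<mu>2 k p r = (case k of Inl m \<Rightarrow> \<mu>1 m (fst p) (snd p) r | Inr m \<Rightarrow> \<mu>2 m (fst p) (snd p) r)"

lemma joint_ctx_in_joint_ctxs: "j < M1 + M2 \<Longrightarrow> joint_ctx M1 j \<in> joint_ctxs M1 M2"
  unfolding joint_ctx_def joint_ctxs_def by auto

lemma joint_ctxs_subset: "joint_ctxs M1 M2 \<subseteq> joint_ctx M1 ` {..<M1 + M2}"
proof
  fix k assume "k \<in> joint_ctxs M1 M2"
  then consider m where "m < M1" "k = Inl m" | m where "m < M2" "k = Inr m"
    unfolding joint_ctxs_def by auto
  then show "k \<in> joint_ctx M1 ` {..<M1 + M2}"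
    by cases (auto simp: joint_ctx_def image_iff intro: bexI[of _ "M1 + _"])
qed

lemma moment_diff_nths_eq:
  fixes x :: "('s \<times> 'a) list"
  assumes "length z = length x" "J \<subseteq> {..<length x}"
  shows "moment M1 w1 \<mu>1 (nths x J) (nths z J) - moment M2 w2 \<mu>2 (nths x J) (nths z J)
       = (\<Sum>k\<in>joint_ctxs M1 M2. signed_weight w1 w2 k * (\<Prod>t\<in>J. joint_reward \<mu>1 \<mu>2 k (x!t) (z!t)))"
proof -
  have J: "{t. t < length x \<and> t \<in> J} = J" using assms(2) by auto
  have nths_prod: "(\<Prod>i<length (nths x J). \<mu> m (fst (nths x J ! i)) (snd (nths x J ! i)) (nths z J ! i))
      = (\<Prod>t\<in>J. \<mu> m (fst (x!t)) (snd (x!t)) (z!t))" for \<mu> :: "nat \<Rightarrow> 's \<Rightarrow> 'a \<Rightarrow> real \<Rightarrow> real" and m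
    using prod_nths[OF assms(1)[symmetric], of "\<lambda>p r. \<mu> m (fst p) (snd p) r" J] J by simp
  have "(\<Sum>k\<in>joint_ctxs M1 M2. signed_weight w1 w2 k * F k)
      = (\<Sum>m<M1. w1 m * F (Inl m)) - (\<Sum>m<M2. w2 m * F (Inr m))" for F :: "nat + nat \<Rightarrow> real"
    unfolding joint_ctxs_def
    by (subst sum.union_disjoint) (auto simp: sum.reindex signed_weight_def sum_negf)
  then show ?thesis
    unfolding moment_def nths_prod joint_reward_def by simp
qed

lemma moment_diff_eq:
  fixes x :: "('s \<times> 'a) list"
  assumes "length x = H" "length z = H"
  shows "moment M1 w1 \<mu>1 x z - moment M2 w2 \<mu>2 x z
       = (\<Sum>k\<in>joint_ctxs M1 M2. signed_weight w1 w2 k * (\<Prod>s<H. joint_reward \<mu>1 \<mu>2 k (x!s) (z!s)))"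
proof -
  have "length z = length x" "{..<H} \<subseteq> {..<length x}" using assms by simp_all
  note eq = moment_diff_nths_eq[OF this]
  have "nths x {..<H} = x" "nths z {..<H} = z" using assms by simp_all
  with eq show ?thesis by simp
qed

lemma joint_reward_kernel:
  assumes "rmmdp S A Z T \<nu> M1 w1 \<mu>1" "rmmdp S A Z T \<nu> M2 w2 \<mu>2" "k \<in> joint_ctxs M1 M2" "p \<in> S \<times> A"
  shows "(\<forall>r\<in>Z. joint_reward \<mu>1 \<mu>2 k p r \<ge> 0) \<and> sum (joint_reward \<mu>1 \<mu>2 k p) Z = 1"
  using assms unfolding joint_ctxs_def rmmdp_def joint_reward_def by (cases p) auto

text \<open>The uniform factor 1/card Z on J is paid for by the weight (card Z)^(card J) in the
  bound below.\<close>
definition anchor_kernel ::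
  "real set \<Rightarrow> (nat \<Rightarrow> 's \<Rightarrow> 'a \<Rightarrow> real \<Rightarrow> real) \<Rightarrow> (nat \<Rightarrow> 's \<Rightarrow> 'a \<Rightarrow> real \<Rightarrow> real) \<Rightarrow> nat
   \<Rightarrow> nat set \<Rightarrow> nat set \<Rightarrow> nat \<Rightarrow> 's \<times> 'a \<Rightarrow> real \<Rightarrow> real" where
  "anchor_kernel Z \<mu>1 \<mu>2 M1 C J j p r =
     (if j \<in> J then 1 / real (card Z) else joint_reward \<mu>1 \<mu>2 (joint_ctx M1 (rank_in C j)) p r)"

lemma anchor_kernel_reward_kernels:
  assumes "rmmdp S A Z T \<nu> M1 w1 \<mu>1" "rmmdp S A Z T \<nu> M2 w2 \<mu>2" "finite C" "card C < M1 + M2"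
  shows "reward_kernels S A Z (anchor_kernel Z \<mu>1 \<mu>2 M1 C J)"
  unfolding reward_kernels_def
proof (intro allI ballI)
  fix j p assume p: "p \<in> S \<times> A"
  have "finite Z" "Z \<noteq> {}" using assms(1) unfolding rmmdp_def by auto
  moreover have "joint_ctx M1 (rank_in C j) \<in> joint_ctxs M1 M2"
    using rank_in_le_card[OF assms(3), of j] assms(4) by (intro joint_ctx_in_joint_ctxs) linarith
  ultimately show "(\<forall>r\<in>Z. anchor_kernel Z \<mu>1 \<mu>2 M1 C J j p r \<ge> 0) \<and> sum (anchor_kernel Z \<mu>1 \<mu>2 M1 C J j p) Z = 1"
    using joint_reward_kernel[OF assms(1,2) _ p] unfolding anchor_kernel_def by (cases "j \<in> J") auto
qed

lemma prod_anchor_kernel: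
  assumes "J \<subseteq> {..<H}" "finite Z" "Z \<noteq> {}"
  shows "(\<Prod>s\<in>{..<H}-J. joint_reward \<mu>1 \<mu>2 (joint_ctx M1 (rank_in C s)) (x!s) (z!s))
       = real (card Z) ^ card J * (\<Prod>j<H. anchor_kernel Z \<mu>1 \<mu>2 M1 C J j (x!j) (z!j))"
proof -
  have "(\<Prod>j<H. anchor_kernel Z \<mu>1 \<mu>2 M1 C J j (x!j) (z!j))
      = (\<Prod>j\<in>{..<H}-J. anchor_kernel Z \<mu>1 \<mu>2 M1 C J j (x!j) (z!j))
        * (\<Prod>j\<in>J. anchor_kernel Z \<mu>1 \<mu>2 M1 C J j (x!j) (z!j))"
    by (rule prod.subset_diff[OF assms(1)]) simp
  also have "\<dots> = (\<Prod>s\<in>{..<H}-J. joint_reward \<mu>1 \<mu>2 (joint_ctx M1 (rank_in C s)) (x!s) (z!s))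
      * (1 / real (card Z)) ^ card J"
    unfolding anchor_kernel_def by (auto intro!: prod.cong)
  finally show ?thesis using assms(2,3) by (simp add: power_one_over card_gt_0_iff)
qed

lemma moment_diff_le_anchor_sum:
  assumes rm1: "rmmdp S A Z T \<nu> M1 w1 \<mu>1" and rm2: "rmmdp S A Z T \<nu> M2 w2 \<mu>2"
    and x: "x \<in> Etot S A H (min H (M1+M2-1)) (Xset S A Z (min H (M1+M2-1)) \<delta> M1 w1 \<mu>1 M2 w2 \<mu>2)"
    and z: "z \<in> lists_of_len Z H"
  shows "\<bar>moment M1 w1 \<mu>1 x z - moment M2 w2 \<mu>2 x z\<bar>
     \<le> \<delta> * (\<Sum>C\<in>{C\<in>Pow {..<H}. card C < M1+M2}. \<Sum>J\<in>Pow C.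
          real (card Z) ^ card J * (\<Prod>j<H. anchor_kernel Z \<mu>1 \<mu>2 M1 C J j (x!j) (z!j)))"
proof -
  define v where "v k t = joint_reward \<mu>1 \<mu>2 k (x!t) (z!t)" for k t
  define Cs where "Cs = {C\<in>Pow {..<H}. card C < M1+M2}"
  have xl: "length x = H" "set x \<subseteq> S \<times> A" using x unfolding Etot_def by auto
  have zl: "length z = H" "set z \<subseteq> Z" using z unfolding lists_of_len_def by auto
  have fZ: "finite Z" "Z \<noteq> {}" using rm1 unfolding rmmdp_def by auto
  have diff: "moment M1 w1 \<mu>1 x z - moment M2 w2 \<mu>2 x z
      = (\<Sum>k\<in>joint_ctxs M1 M2. signed_weight w1 w2 k * (\<Prod>s<H. v k s))"
    unfolding v_def by (rule moment_diff_eq[OF xl(1) zl(1)])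
  have "\<bar>\<Sum>k\<in>joint_ctxs M1 M2. signed_weight w1 w2 k * (\<Prod>s<H. v k s)\<bar>
      \<le> \<delta> * (\<Sum>C\<in>Cs. \<Sum>J\<in>Pow C. \<Prod>s\<in>{..<H}-J. v (joint_ctx M1 (rank_in C s)) s)"
    unfolding Cs_def
  proof (rule signed_mixture_prod_bound[where v = v and c = "signed_weight w1 w2" and \<kappa> = "joint_ctx M1",
        OF joint_ctxs_subset])
    fix j t assume jt: "j < M1 + M2" "t < H"
    have "x!t \<in> S \<times> A" "z!t \<in> Z" using nth_mem[of t x] nth_mem[of t z] xl zl jt(2) by auto
    from joint_reward_kernel[OF rm1 rm2 joint_ctx_in_joint_ctxs[OF jt(1)] this(1)] this(2)
    show "v (joint_ctx M1 j) t \<ge> 0" unfolding v_def by blast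
  next
    fix J assume J: "J \<subseteq> {..<H}" "card J < M1 + M2"
    have "card J \<le> H" using card_mono[OF _ J(1)] by simp
    then have card_J: "card J \<le> min H (M1 + M2 - 1)" using J(2) by linarith
    have J_in_x: "length z = length x" "J \<subseteq> {..<length x}" using J(1) xl(1) zl(1) by auto
    from Etot_moment_diff_le[OF x min.cobounded1 J(1) card_J z]
    show "\<bar>\<Sum>k\<in>joint_ctxs M1 M2. signed_weight w1 w2 k * (\<Prod>t\<in>J. v k t)\<bar> \<le> \<delta>"
      unfolding moment_diff_nths_eq[OF J_in_x] v_def .
  qed
  also have "\<dots> = \<delta> * (\<Sum>C\<in>Cs. \<Sum>J\<in>Pow C.
      real (card Z) ^ card J * (\<Prod>j<H. anchor_kernel Z \<mu>1 \<mu>2 M1 C J j (x!j) (z!j)))"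
  proof -
    have "(\<Prod>s\<in>{..<H}-J. v (joint_ctx M1 (rank_in C s)) s)
        = real (card Z) ^ card J * (\<Prod>j<H. anchor_kernel Z \<mu>1 \<mu>2 M1 C J j (x!j) (z!j))"
      if "C \<in> Cs" "J \<in> Pow C" for C J
    proof -
      have "J \<subseteq> {..<H}" using that unfolding Cs_def by auto
      then show ?thesis unfolding v_def by (rule prod_anchor_kernel[OF _ fZ])
    qed
    then show ?thesis by (intro arg_cong2[where f="(*)"] sum.cong refl) auto
  qed
  finally show ?thesis unfolding diff Cs_def .
qed

lemma policy_weighted_moment_diff_le:
  assumes "rmmdp S A Z T \<nu> M1 w1 \<mu>1" "rmmdp S A Z T \<nu> M2 w2 \<mu>2"
    and x: "x \<in> Etot S A H (min H (M1+M2-1)) (Xset S A Z (min H (M1+M2-1)) \<delta> M1 w1 \<mu>1 M2 w2 \<mu>2)"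
    and "\<pi> \<in> policies S A"
  shows "(\<Sum>z\<in>lists_of_len Z H. policy_weight \<pi> x z * \<bar>moment M1 w1 \<mu>1 x z - moment M2 w2 \<mu>2 x z\<bar>)
     \<le> \<delta> * (\<Sum>C\<in>{C\<in>Pow {..<H}. card C < M1+M2}. \<Sum>J\<in>Pow C.
          real (card Z) ^ card J * averaged_policy_weight Z (anchor_kernel Z \<mu>1 \<mu>2 M1 C J) \<pi> x)"
proof -
  define Cs where "Cs = {C\<in>Pow {..<H}. card C < M1+M2}"
  define g where "g C J z = real (card Z) ^ card J * (\<Prod>j<H. anchor_kernel Z \<mu>1 \<mu>2 M1 C J j (x!j) (z!j))"
    for C J z
  have xl: "length x = H" "set x \<subseteq> S \<times> A" using x unfolding Etot_def by auto
  have "(\<Sum>z\<in>lists_of_len Z H. policy_weight \<pi> x z * \<bar>moment M1 w1 \<mu>1 x z - moment M2 w2 \<mu>2 x z\<bar>)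
      \<le> (\<Sum>z\<in>lists_of_len Z H. policy_weight \<pi> x z * (\<delta> * (\<Sum>C\<in>Cs. \<Sum>J\<in>Pow C. g C J z)))"
    unfolding Cs_def g_def using policy_weight_nonneg[OF assms(4) xl(2)]
    by (intro sum_mono mult_left_mono moment_diff_le_anchor_sum[OF assms(1-3)])
  also have "\<dots> = \<delta> * (\<Sum>C\<in>Cs. \<Sum>J\<in>Pow C. \<Sum>z\<in>lists_of_len Z H. g C J z * policy_weight \<pi> x z)"
    by (simp add: sum_distrib_left sum_distrib_right mult_ac sum.swap[of _ "lists_of_len Z H"])
  also have "\<dots> = \<delta> * (\<Sum>C\<in>Cs. \<Sum>J\<in>Pow C.
      real (card Z) ^ card J * averaged_policy_weight Z (anchor_kernel Z \<mu>1 \<mu>2 M1 C J) \<pi> x)"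
    unfolding averaged_policy_weight_def g_def xl(1) by (simp add: sum_distrib_left mult_ac)
  finally show ?thesis unfolding Cs_def .
qed

section \<open>Bounding the total variation on E\<close>

lemma sum_abs_traj_prob_diff_eq:
  assumes E: "E \<subseteq> {x. length x = H \<and> set x \<subseteq> S \<times> A}" and "H > 0"
    and rm1: "rmmdp S A Z T \<nu> M1 w1 \<mu>1" and \<pi>: "\<pi> \<in> policies S A"
  shows "(\<Sum>\<tau>\<in>{\<tau>\<in>trajs S A Z H. sa_part \<tau> \<in> E}.
            \<bar>traj_prob T \<nu> M1 w1 \<mu>1 \<pi> \<tau> - traj_prob T \<nu> M2 w2 \<mu>2 \<pi> \<tau>\<bar>)
       = (\<Sum>x\<in>E. dynamics_weight T \<nu> x
            * (\<Sum>z\<in>lists_of_len Z H. policy_weight \<pi> x z * \<bar>moment M1 w1 \<mu>1 x z - moment M2 w2 \<mu>2 x z\<bar>))"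
  unfolding sum_trajs_mk_traj[OF E] sum_distrib_left
proof (intro sum.cong refl)
  fix x z assume "x \<in> E" "z \<in> lists_of_len Z H"
  then have x: "set x \<subseteq> S \<times> A" "x \<noteq> []" and z: "length z = length x"
    using E \<open>H > 0\<close> unfolding lists_of_len_def by auto
  have "0 \<le> dynamics_weight T \<nu> x" using dynamics_weight_bounds[OF rm1 x(2,1)] by simp
  moreover have "0 \<le> policy_weight \<pi> x z" by (rule policy_weight_nonneg[OF \<pi> x(1)])
  ultimately show "\<bar>traj_prob T \<nu> M1 w1 \<mu>1 \<pi> (mk_traj x z) - traj_prob T \<nu> M2 w2 \<mu>2 \<pi> (mk_traj x z)\<bar>
      = dynamics_weight T \<nu> x * (policy_weight \<pi> x z * \<bar>moment M1 w1 \<mu>1 x z - moment M2 w2 \<mu>2 x z\<bar>)"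
    unfolding traj_prob_mk_traj[OF z x(2)] by (simp add: right_diff_distrib[symmetric] abs_mult mult.assoc)
qed

lemma sum_abs_traj_prob_diff_le_simulated:
  assumes "H > 0" and rm1: "rmmdp S A Z T \<nu> M1 w1 \<mu>1" and rm2: "rmmdp S A Z T \<nu> M2 w2 \<mu>2"
    and E: "E \<subseteq> Etot S A H (min H (M1 + M2 - 1)) (Xset S A Z (min H (M1 + M2 - 1)) \<delta> M1 w1 \<mu>1 M2 w2 \<mu>2)"
    and \<pi>: "\<pi> \<in> policies S A"
  shows "(\<Sum>\<tau>\<in>{\<tau>\<in>trajs S A Z H. sa_part \<tau> \<in> E}.
            \<bar>traj_prob T \<nu> M1 w1 \<mu>1 \<pi> \<tau> - traj_prob T \<nu> M2 w2 \<mu>2 \<pi> \<tau>\<bar>)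
       \<le> \<delta> * (\<Sum>C\<in>{C\<in>Pow {..<H}. card C < M1+M2}. \<Sum>J\<in>Pow C. real (card Z) ^ card J
            * event_prob S A Z H T \<nu> M1 w1 \<mu>1 (simulated_policy S A Z (anchor_kernel Z \<mu>1 \<mu>2 M1 C J) \<pi>) E)"
proof -
  define Cs where "Cs = {C\<in>Pow {..<H}. card C < M1+M2}"
  define W where "W C J x = averaged_policy_weight Z (anchor_kernel Z \<mu>1 \<mu>2 M1 C J) \<pi> x" for C J x
  have E': "E \<subseteq> {x. length x = H \<and> set x \<subseteq> S \<times> A}" using E unfolding Etot_def by auto
  have "(\<Sum>\<tau>\<in>{\<tau>\<in>trajs S A Z H. sa_part \<tau> \<in> E}.
            \<bar>traj_prob T \<nu> M1 w1 \<mu>1 \<pi> \<tau> - traj_prob T \<nu> M2 w2 \<mu>2 \<pi> \<tau>\<bar>)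
      \<le> (\<Sum>x\<in>E. dynamics_weight T \<nu> x * (\<delta> * (\<Sum>C\<in>Cs. \<Sum>J\<in>Pow C. real (card Z) ^ card J * W C J x)))"
    unfolding sum_abs_traj_prob_diff_eq[OF E' \<open>H > 0\<close> rm1 \<pi>] Cs_def W_def
  proof (intro sum_mono mult_left_mono)
    fix x assume "x \<in> E"
    then show "(\<Sum>z\<in>lists_of_len Z H. policy_weight \<pi> x z * \<bar>moment M1 w1 \<mu>1 x z - moment M2 w2 \<mu>2 x z\<bar>)
      \<le> \<delta> * (\<Sum>C\<in>{C\<in>Pow {..<H}. card C < M1+M2}. \<Sum>J\<in>Pow C.
          real (card Z) ^ card J * averaged_policy_weight Z (anchor_kernel Z \<mu>1 \<mu>2 M1 C J) \<pi> x)"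
      using E by (intro policy_weighted_moment_diff_le[OF rm1 rm2 _ \<pi>]) auto
    show "0 \<le> dynamics_weight T \<nu> x"
      using \<open>x \<in> E\<close> E' \<open>H > 0\<close> dynamics_weight_bounds[OF rm1, of x] by auto
  qed
  also have "\<dots> = \<delta> * (\<Sum>C\<in>Cs. \<Sum>J\<in>Pow C. real (card Z) ^ card J * (\<Sum>x\<in>E. dynamics_weight T \<nu> x * W C J x))"
    by (simp add: sum_distrib_left mult_ac sum.swap[of _ E])
  also have "\<dots> = \<delta> * (\<Sum>C\<in>Cs. \<Sum>J\<in>Pow C. real (card Z) ^ card J
      * event_prob S A Z H T \<nu> M1 w1 \<mu>1 (simulated_policy S A Z (anchor_kernel Z \<mu>1 \<mu>2 M1 C J) \<pi>) E)"
    unfolding W_def Cs_def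
    by (intro arg_cong2[where f="(*)"] sum.cong refl event_prob_simulated_policy[symmetric] E' \<open>H > 0\<close> rm1
        anchor_kernel_reward_kernels[OF rm1 rm2] \<pi>) (auto dest: finite_subset)
  finally show ?thesis unfolding Cs_def .
qed

lemma card_subsets_card_less_le:
  assumes "H > 0"
  shows "real (card {C\<in>Pow {..<H}. card C < K}) \<le> (2 * real H) ^ min H (K - 1)"
proof -
  define d where "d = min H (K - 1)"
  define L where "L = {l. set l \<subseteq> {..H} \<and> length l = d}"
  have "{C\<in>Pow {..<H}. card C < K} \<subseteq> (\<lambda>l. set l - {H}) ` L"
  proof
    fix C assume "C \<in> {C\<in>Pow {..<H}. card C < K}"
    then have C: "C \<subseteq> {..<H}" "card C < K" by auto
    have fC: "finite C" using C(1) finite_subset by blast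
    have "card C \<le> H" using card_mono[OF _ C(1)] by simp
    then have "card C \<le> d" using C(2) unfolding d_def by linarith
    then have "sorted_list_of_set C @ replicate (d - card C) H \<in> L"
      unfolding L_def using fC C(1) by auto
    moreover have "set (sorted_list_of_set C @ replicate (d - card C) H) - {H} = C"
      using fC C(1) by auto
    ultimately show "C \<in> (\<lambda>l. set l - {H}) ` L" by (metis image_eqI)
  qed
  moreover have "finite L" unfolding L_def by (simp add: finite_lists_length_eq)
  ultimately have "card {C\<in>Pow {..<H}. card C < K} \<le> card L"
    by (meson card_image_le card_mono finite_imageI le_trans)
  also have "card L = Suc H ^ d" unfolding L_def by (simp add: card_lists_length_eq)
  finally have "real (card {C\<in>Pow {..<H}. card C < K}) \<le> real (Suc H) ^ d"
    by (metis of_nat_le_iff of_nat_power)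
  also have "\<dots> \<le> (2 * real H) ^ d" using assms by (intro power_mono) auto
  finally show ?thesis unfolding d_def .
qed

lemma sum_pow_card_subsets_le:
  fixes c :: real
  assumes "H > 0" "c \<ge> 1"
  shows "(\<Sum>C\<in>{C\<in>Pow {..<H}. card C < K}. \<Sum>J\<in>Pow C. c ^ card J) \<le> (4 * real H * c) ^ min H (K - 1)"
proof -
  define d where "d = min H (K - 1)"
  define Cs where "Cs = {C\<in>Pow {..<H}. card C < K}"
  have "(\<Sum>J\<in>Pow C. c ^ card J) \<le> 2 ^ d * c ^ d" if "C \<in> Cs" for C
  proof -
    have C: "finite C" "card C \<le> d"
      using that card_mono[of "{..<H}" C] finite_subset unfolding Cs_def d_def by auto
    have "c ^ card J \<le> c ^ d" if "J \<subseteq> C" for J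
      using card_mono[OF C(1) that] C(2) assms(2) by (intro power_increasing) auto
    then have "(\<Sum>J\<in>Pow C. c ^ card J) \<le> (\<Sum>J\<in>Pow C. c ^ d)"
      by (intro sum_mono) auto
    also have "\<dots> = 2 ^ card C * c ^ d" using C(1) by (simp add: card_Pow)
    also have "\<dots> \<le> 2 ^ d * c ^ d" using C(2) assms(2) by (intro mult_right_mono power_increasing) auto
    finally show ?thesis .
  qed
  then have "(\<Sum>C\<in>Cs. \<Sum>J\<in>Pow C. c ^ card J) \<le> real (card Cs) * (2 ^ d * c ^ d)"
    using sum_mono[of Cs "\<lambda>C. \<Sum>J\<in>Pow C. c ^ card J" "\<lambda>_. 2 ^ d * c ^ d"] by simp
  also have "\<dots> \<le> (2 * real H) ^ d * (2 ^ d * c ^ d)"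
    using card_subsets_card_less_le[OF assms(1), of K] assms(2)
    unfolding Cs_def d_def by (intro mult_right_mono) auto
  also have "\<dots> = (4 * real H * c) ^ d"
    by (simp only: power_mult_distrib[symmetric] mult_ac) (simp add: mult_ac)
  finally show ?thesis unfolding Cs_def d_def .
qed

theorem theorem2:
  fixes S :: "'s set" and A :: "'a set" and Z :: "real set" and H :: nat
    and T :: "'s \<Rightarrow> 'a \<Rightarrow> 's \<Rightarrow> real" and \<nu> :: "'s \<Rightarrow> real"
    and M1 M2 :: nat and w1 w2 :: "nat \<Rightarrow> real"
    and \<mu>1 \<mu>2 :: "nat \<Rightarrow> 's \<Rightarrow> 'a \<Rightarrow> real \<Rightarrow> real"
    and \<delta> :: real and E :: "('s \<times> 'a) list set"
    and \<pi> :: "('s \<times> 'a \<times> real) list \<Rightarrow> 's \<Rightarrow> 'a \<Rightarrow> real"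
  assumes "\<delta> > 0" and "H > 0"
    and "rmmdp S A Z T \<nu> M1 w1 \<mu>1" and "rmmdp S A Z T \<nu> M2 w2 \<mu>2"
    and "E \<subseteq> Etot S A H (min H (M1 + M2 - 1))
                 (Xset S A Z (min H (M1 + M2 - 1)) \<delta> M1 w1 \<mu>1 M2 w2 \<mu>2)"
    and "\<pi> \<in> policies S A"
  shows "(\<Sum>\<tau>\<in>{\<tau>\<in>trajs S A Z H. sa_part \<tau> \<in> E}.
            \<bar>traj_prob T \<nu> M1 w1 \<mu>1 \<pi> \<tau> - traj_prob T \<nu> M2 w2 \<mu>2 \<pi> \<tau>\<bar>)
         \<le> Sup ((\<lambda>\<pi>'. event_prob S A Z H T \<nu> M1 w1 \<mu>1 \<pi>' E) ` policies S A)
            * (4 * real H * real (card Z)) ^ (min H (M1 + M2 - 1)) * \<delta>"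
proof -
  let ?P = "\<lambda>\<pi>'. event_prob S A Z H T \<nu> M1 w1 \<mu>1 \<pi>' E"
  let ?sup = "Sup (?P ` policies S A)"
  let ?Cs = "{C\<in>Pow {..<H}. card C < M1 + M2}"
  let ?c = "real (card Z)"
  note rm1 = assms(3) and rm2 = assms(4)
  have fin: "finite A" "A \<noteq> {}" "finite Z" "Z \<noteq> {}" using rm1 unfolding rmmdp_def by auto
  then have c: "?c \<ge> 1" by (simp add: Suc_le_eq card_gt_0_iff)
  have E: "E \<subseteq> {x. length x = H \<and> set x \<subseteq> S \<times> A}" using assms(5) unfolding Etot_def by auto
  have "?P (simulated_policy S A Z (anchor_kernel Z \<mu>1 \<mu>2 M1 C J) \<pi>) \<le> ?sup" if "C \<in> ?Cs" for C J
    using that by (intro event_prob_le_Sup(2)[OF rm1 E assms(2)] simulated_policy_in_policies[OF fin(1,2) _ assms(6)]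
        anchor_kernel_reward_kernels[OF rm1 rm2]) (auto dest: finite_subset)
  then have "(\<Sum>\<tau>\<in>{\<tau>\<in>trajs S A Z H. sa_part \<tau> \<in> E}.
            \<bar>traj_prob T \<nu> M1 w1 \<mu>1 \<pi> \<tau> - traj_prob T \<nu> M2 w2 \<mu>2 \<pi> \<tau>\<bar>)
      \<le> \<delta> * (\<Sum>C\<in>?Cs. \<Sum>J\<in>Pow C. ?c ^ card J * ?sup)"
    using assms(1) c
    by (intro order_trans[OF sum_abs_traj_prob_diff_le_simulated[OF assms(2) rm1 rm2 assms(5,6)]]
        mult_left_mono sum_mono) auto
  also have "\<dots> = \<delta> * ?sup * (\<Sum>C\<in>?Cs. \<Sum>J\<in>Pow C. ?c ^ card J)"
    by (simp add: sum_distrib_left sum_distrib_right mult_ac)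
  also have "\<dots> \<le> \<delta> * ?sup * (4 * real H * ?c) ^ min H (M1 + M2 - 1)"
    using assms(1) event_prob_le_Sup[OF rm1 E assms(2,6)]
    by (intro mult_left_mono sum_pow_card_subsets_le[OF assms(2) c]) auto
  finally show ?thesis by (simp add: mult_ac)
qed

end
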